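(* For every integer $B\ge3$, the risk $R(\mu)=\mathbb E\|\eta^{JS}(\mu+\mathbf Z)-\mu\|_2^2$, $\mu\in\mathbb R^B$, $\mathbf Z\sim\mathsf N(0,I_{B\times B})$, depends on $\mu$ only through $\|\mu\|_2$ and is a nondecreasing function of $\|\mu\|_2\in[0,\infty)$.
   Context: The positive-part James–Stein denoiser on $\mathbb R^B$ is $\eta^{JS}(y)=\big(1-(B-2)/\|y\|_2^2\big)_+\,y$. *)

theory Defs
  imports "HOL-Probability.Probability"
begin

text \<open>Positive-part James--Stein denoiser on R^B, B = CARD('n).
  Note: at y = 0 the HOL convention x/0 = 0 gives value 0, which is immaterial.\<close>
definition js :: "real ^ 'n \<Rightarrow> real ^ 'n" where
  "js y = max 0 (1 - (real CARD('n) - 2) / (norm y)\<^sup>2) *\<^sub>R y"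

definition std_gauss :: "(real ^ 'n) measure" where
  "std_gauss = density lborel (\<lambda>z. ennreal (\<Prod>i\<in>UNIV. std_normal_density (z $ i)))"

definition js_risk :: "real ^ 'n \<Rightarrow> real" where
  "js_risk \<mu> = (\<integral>z. (norm (js (\<mu> + z) - \<mu>))\<^sup>2 \<partial>std_gauss)"

end

theory Submission
  imports Defs "HOL-Real_Asymp.Real_Asymp"
begin

text \<open>
  (1) Rotation invariance.  Lebesgue measure, hence the standard Gaussian, is invariant under
  orthogonal maps, and the rule commutes with them; so \<open>R(\<mu>) = R(\<parallel>\<mu>\<parallel> e\<^sub>i)\<close>.
  (2) Stein's unbiased risk estimate.  Writing \<open>js(y) = y - s(\<parallel>y\<parallel>\<^sup>2) y\<close> and applying Stein's
  identity \<open>E[X H(X)] = E[H'(X)]\<close> along each coordinate (after resampling that coordinate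
  independently) gives \<open>R(\<mu>) = E js_sure(\<parallel>\<mu> + Z\<parallel>\<^sup>2)\<close>, with \<open>js_sure\<close> bounded and
  nondecreasing on \<open>[0, \<infinity>)\<close>.
  (3) Monotonicity.  For bounded nondecreasing \<open>k\<close>, \<open>E k((r + X)\<^sup>2)\<close> with \<open>X\<close> standard
  normal is nondecreasing in \<open>r \<ge> 0\<close>, by a single-crossing argument for the density ratio
  \<open>exp(-r\<^sup>2/2) cosh(r w)\<close>; resampling the \<open>i\<close>-th coordinate lifts this to \<open>E k(\<parallel>r e\<^sub>i + Z\<parallel>\<^sup>2)\<close>.
\<close>

lemma linear_borel_measurable:
  fixes f :: "'a::euclidean_space \<Rightarrow> 'b::euclidean_space"
  assumes "linear f"
  shows "f \<in> borel_measurable borel"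
  using assms by (intro borel_measurable_continuous_onI linear_continuous_on linear_conv_bounded_linear[THEN iffD1])

text \<open>A linear isometry that permutes the standard bases preserves Lebesgue measure: it maps
  boxes to boxes of the same volume.\<close>
lemma lborel_distr_basis_isometry:
  fixes f :: "'a::euclidean_space \<Rightarrow> 'b::euclidean_space"
  assumes lin: "linear f" and inner: "\<And>x y. f x \<bullet> f y = x \<bullet> y"
    and basis: "bij_betw f Basis Basis"
  shows "distr lborel borel f = lborel"
proof (rule lborel_eqI[symmetric])
  fix l u :: 'b
  assume le: "\<And>b. b \<in> Basis \<Longrightarrow> l \<bullet> b \<le> u \<bullet> b"
  have fB: "b \<in> Basis \<Longrightarrow> f b \<in> Basis" for b
    using basis by (auto simp: bij_betw_def)
  define pull :: "'b \<Rightarrow> 'a" where "pull v = (\<Sum>b\<in>Basis. (v \<bullet> f b) *\<^sub>R b)" for v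
  have pull_inner: "b \<in> Basis \<Longrightarrow> pull v \<bullet> b = v \<bullet> f b" for v b
    by (simp add: pull_def inner_sum_left inner_Basis if_distrib cong: if_cong)
  have all_Basis: "(\<forall>b\<in>Basis. P b) \<longleftrightarrow> (\<forall>b\<in>Basis. P (f b))" for P
    by (metis bij_betw_imp_surj_on[OF basis] imageE imageI)
  have "f -` box l u = box (pull l) (pull u)"
    by (auto simp: mem_box all_Basis[of "\<lambda>b. l \<bullet> b < f _ \<bullet> b \<and> f _ \<bullet> b < u \<bullet> b"] pull_inner inner)
  moreover have "\<forall>b\<in>Basis. pull l \<bullet> b \<le> pull u \<bullet> b"
    using le fB by (simp add: pull_inner)
  moreover have "(\<Prod>b\<in>Basis. (pull u - pull l) \<bullet> b) = (\<Prod>b\<in>Basis. (u - l) \<bullet> b)"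
    using prod.reindex_bij_betw[OF basis, of "\<lambda>b. (u - l) \<bullet> b"]
    by (simp add: inner_diff_left pull_inner)
  moreover note linear_borel_measurable[OF lin]
  ultimately show "emeasure (distr lborel borel f) (box l u) = (\<Prod>b\<in>Basis. (u - l) \<bullet> b)"
    by (simp add: emeasure_distr emeasure_lborel_box_eq)
qed simp

text \<open>Rotation invariance of Lebesgue measure, from the library's change of volume under
  orthogonal maps, which is stated for wellordered index types.\<close>
lemma lborel_distr_orthogonal_wellorder:
  fixes Q :: "real^'m::{finite,wellorder} \<Rightarrow> real^'m::_"
  assumes Q: "orthogonal_transformation Q"
  shows "distr lborel borel Q = lborel"
proof (rule lborel_eqI[symmetric])
  fix l u :: "real^'m::{finite,wellorder}"
  assume le: "\<And>b. b \<in> Basis \<Longrightarrow> l \<bullet> b \<le> u \<bullet> b"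
  have meas: "Q \<in> borel_measurable borel"
    by (rule linear_borel_measurable[OF orthogonal_transformation_linear[OF Q]])
  have invQ: "orthogonal_transformation (inv Q)"
    by (rule orthogonal_transformation_inv[OF Q])
  have pre: "Q -` box l u = inv Q ` box l u"
    by (rule bij_vimage_eq_inv_image[OF orthogonal_transformation_bij[OF Q]])
  have borel: "Q -` box l u \<in> sets borel"
    using measurable_sets_borel[OF meas] by simp
  have finite: "emeasure lborel (Q -` box l u) < \<infinity>"
    unfolding pre using orthogonal_transformation_linear[OF invQ]
    by (intro emeasure_bounded_finite bounded_linear_image bounded_box linear_conv_bounded_linear[THEN iffD1])
  have "emeasure (distr lborel borel Q) (box l u) = emeasure lborel (Q -` box l u)"
    using meas by (simp add: emeasure_distr)
  also have "\<dots> = measure lebesgue (inv Q ` box l u)"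
    using finite borel unfolding pre by (simp add: emeasure_eq_ennreal_measure measure_completion)
  also have "\<dots> = measure lebesgue (box l u)"
    using measure_orthogonal_image[OF invQ] by simp
  also have "\<dots> = emeasure lborel (box l u)"
    using emeasure_lborel_box_finite[of l u] by (simp add: emeasure_eq_ennreal_measure)
  finally show "emeasure (distr lborel borel Q) (box l u) = (\<Prod>b\<in>Basis. (u - l) \<bullet> b)"
    using le by (simp add: emeasure_lborel_box_eq)
qed simp

text \<open>A wellordered copy \<open>{0..<CARD('i)}\<close> of a finite index type; relabelling coordinates
  along a bijection with it transports the previous lemma to arbitrary finite index types.\<close>
typedef ('i::finite) wo_index = "{..<CARD('i)}"
  by (rule exI[of _ 0]) simp

instantiation wo_index :: (finite) linorder
begin
definition less_eq_wo_index_def: "a \<le> b \<longleftrightarrow> Rep_wo_index a \<le> Rep_wo_index b"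
definition less_wo_index_def: "a < b \<longleftrightarrow> Rep_wo_index a < Rep_wo_index b"
instance
  by standard (auto simp: less_eq_wo_index_def less_wo_index_def Rep_wo_index_inject)
end

instance wo_index :: (finite) finite
  by standard (metis finite_imageI finite_lessThan type_definition.Abs_image[OF type_definition_wo_index])

instance wo_index :: (finite) wellorder
proof -
  have "wf {(x :: 'a::finite wo_index, y). x < y}"
    by (rule wf_subset[OF wf_measure[of Rep_wo_index]]) (auto simp: less_wo_index_def)
  then show "OFCLASS('a wo_index, wellorder_class)"
    by (rule wf_wellorderI) intro_classes
qed

lemma card_wo_index: "CARD('i::finite wo_index) = CARD('i)"
  using type_definition.card[OF type_definition_wo_index] by simp

definition vec_reindex :: "('b::finite \<Rightarrow> 'a::finite) \<Rightarrow> real^'a \<Rightarrow> real^'b" where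
  "vec_reindex \<sigma> x = (\<chi> j. x $ \<sigma> j)"

lemma vec_reindex_linear: "linear (vec_reindex \<sigma>)"
  by (rule linearI) (simp_all add: vec_reindex_def vec_eq_iff)

lemma vec_reindex_inner:
  assumes "bij \<sigma>"
  shows "vec_reindex \<sigma> x \<bullet> vec_reindex \<sigma> y = x \<bullet> y"
  using sum.reindex_bij_betw[OF assms, of "\<lambda>i. x $ i * y $ i"]
  by (simp add: vec_reindex_def inner_vec_def)

lemma vec_reindex_axis:
  assumes "bij \<sigma>"
  shows "vec_reindex \<sigma> (axis i 1) = axis (inv \<sigma> i) 1"
proof -
  have "\<sigma> j = i \<longleftrightarrow> j = inv \<sigma> i" for j
    using bij_inv_eq_iff[OF assms] by metis
  then show ?thesis
    by (simp add: vec_reindex_def axis_def vec_eq_iff)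
qed

lemma vec_reindex_compose:
  assumes "bij \<sigma>"
  shows "vec_reindex (inv \<sigma>) (vec_reindex \<sigma> x) = x"
  using assms by (simp add: vec_reindex_def vec_eq_iff bij_is_surj surj_f_inv_f)

lemma lborel_distr_vec_reindex:
  assumes "bij \<sigma>"
  shows "distr lborel borel (vec_reindex \<sigma>) = lborel"
proof (rule lborel_distr_basis_isometry[OF vec_reindex_linear vec_reindex_inner[OF assms]])
  have Basis: "Basis = range (\<lambda>i. axis i (1::real))"
    by (auto simp: Basis_vec_def)
  have inj: "inj (vec_reindex \<sigma>)"
    by (rule inj_on_inverseI[where g="vec_reindex (inv \<sigma>)"]) (rule vec_reindex_compose[OF assms])
  have "range (inv \<sigma>) = UNIV"
    using bij_is_surj[OF bij_imp_bij_inv[OF assms]] .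
  then have "vec_reindex \<sigma> ` Basis = Basis"
    unfolding Basis image_image vec_reindex_axis[OF assms]
    by (simp only: image_image[of "\<lambda>j. axis j 1" "inv \<sigma>", symmetric])
  then show "bij_betw (vec_reindex \<sigma>) Basis Basis"
    unfolding bij_betw_def using inj_on_subset[OF inj subset_UNIV] by blast
qed

lemma lborel_distr_orthogonal:
  fixes Q :: "real^'n::finite \<Rightarrow> real^'n"
  assumes Q: "orthogonal_transformation Q"
  shows "distr lborel borel Q = lborel"
proof -
  obtain \<sigma> :: "'n wo_index \<Rightarrow> 'n" where \<sigma>: "bij \<sigma>"
    using finite_same_card_bij[of "UNIV :: 'n wo_index set" "UNIV :: 'n set"] card_wo_index by auto
  let ?R = "vec_reindex \<sigma>" and ?R' = "vec_reindex (inv \<sigma>)"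
  have \<sigma>': "bij (inv \<sigma>)"
    using \<sigma> by (rule bij_imp_bij_inv)
  have lin: "linear Q" "linear ?R" "linear ?R'"
    using Q by (simp_all add: orthogonal_transformation_linear vec_reindex_linear)
  define Q' where "Q' = ?R \<circ> Q \<circ> ?R'"
  have Q': "orthogonal_transformation Q'"
    unfolding orthogonal_transformation_def Q'_def using lin
    using Q by (simp add: linear_compose vec_reindex_inner \<sigma> \<sigma>' orthogonal_transformation_def)
  have Q_eq: "Q = ?R' \<circ> Q' \<circ> ?R"
    by (simp add: Q'_def fun_eq_iff vec_reindex_compose[OF \<sigma>])
  have R: "?R \<in> borel_measurable lborel" and Q'_meas: "Q' \<in> borel_measurable borel"
    and R': "?R' \<in> borel_measurable borel"
    using lin orthogonal_transformation_linear[OF Q'] by (simp_all add: linear_borel_measurable)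
  have "distr lborel borel (Q' \<circ> ?R) = lborel"
    by (simp add: distr_distr[OF Q'_meas R, symmetric] lborel_distr_vec_reindex[OF \<sigma>]
        lborel_distr_orthogonal_wellorder[OF Q'])
  then show ?thesis
    unfolding Q_eq comp_assoc
    using distr_distr[OF R' measurable_comp[OF R Q'_meas]] lborel_distr_vec_reindex[OF \<sigma>'] by simp
qed

definition gauss_density :: "real^'n::finite \<Rightarrow> real" where
  "gauss_density z = (\<Prod>i\<in>UNIV. std_normal_density (z $ i))"

lemma std_gauss_density: "std_gauss = density lborel (\<lambda>z. ennreal (gauss_density z))"
  unfolding std_gauss_def gauss_density_def ..

lemma sets_std_gauss [simp, measurable_cong]: "sets std_gauss = sets borel"
  unfolding std_gauss_def by simp

lemma space_std_gauss [simp]: "space std_gauss = UNIV"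
  unfolding std_gauss_def by simp

lemma gauss_density_measurable [measurable]: "gauss_density \<in> borel_measurable borel"
  unfolding gauss_density_def by measurable

lemma norm_sq_vec: "(norm (z :: real^'n::finite))\<^sup>2 = (\<Sum>i\<in>UNIV. (z $ i)\<^sup>2)"
  unfolding power2_norm_eq_inner inner_vec_def by (simp add: power2_eq_square)

lemma gauss_density_norm:
  "gauss_density (z :: real^'n::finite) = (1 / sqrt (2 * pi)) ^ CARD('n) * exp (- (norm z)\<^sup>2 / 2)"
proof -
  have "gauss_density z = (\<Prod>i\<in>UNIV. (1 / sqrt (2 * pi)) * exp (- (z $ i)\<^sup>2 / 2))"
    unfolding gauss_density_def by (simp add: std_normal_density_def)
  also have "\<dots> = (1 / sqrt (2 * pi)) ^ CARD('n) * exp (\<Sum>i\<in>UNIV. - (z $ i)\<^sup>2 / 2)"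
    unfolding prod.distrib by (simp add: exp_sum)
  also have "(\<Sum>i\<in>UNIV. - (z $ i)\<^sup>2 / 2) = - (norm z)\<^sup>2 / 2"
    by (simp add: norm_sq_vec sum_divide_distrib sum_negf)
  finally show ?thesis .
qed

definition std_normal :: "real measure" where
  "std_normal = density lborel (\<lambda>x. ennreal (std_normal_density x))"

lemma sets_std_normal [simp, measurable_cong]: "sets std_normal = sets borel"
  unfolding std_normal_def by simp

lemma space_std_normal [simp]: "space std_normal = UNIV"
  unfolding std_normal_def by simp

lemma prob_space_std_normal: "prob_space std_normal"
  unfolding std_normal_def by (rule prob_space_normal_density) simp

lemma prob_space_std_gauss: "prob_space (std_gauss :: (real^'n::finite) measure)"
proof
  have Basis: "(Basis :: (real^'n) set) = range (\<lambda>j. axis j 1)"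
    by (auto simp: Basis_vec_def)
  have inj: "inj (\<lambda>j::'n. axis j (1::real))"
    by (auto simp: inj_on_def axis_eq_axis)
  have density_Basis: "gauss_density z = (\<Prod>b\<in>Basis. std_normal_density (z \<bullet> b))" for z :: "real^'n"
    unfolding Basis gauss_density_def prod.reindex[OF inj] by (simp add: inner_axis)
  have normal: "(\<integral>\<^sup>+ x. ennreal (std_normal_density x) \<partial>lborel) = 1"
    using prob_space.emeasure_space_1[OF prob_space_std_normal]
    by (simp add: std_normal_def emeasure_density)
  have "emeasure (std_gauss :: (real^'n) measure) (space std_gauss)
      = (\<integral>\<^sup>+ z. ennreal (gauss_density (z :: real^'n)) \<partial>lborel)"
    unfolding std_gauss_density by (simp add: emeasure_density)
  also have "\<dots> = (\<Prod>b\<in>(Basis :: (real^'n) set). \<integral>\<^sup>+ x. ennreal (std_normal_density x) \<partial>lborel)"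
    unfolding density_Basis
    using nn_integral_lborel_prod[where 'a="real^'n" and f="\<lambda>b x. std_normal_density x"] by (simp add: prod_ennreal)
  also have "\<dots> = 1"
    by (simp add: normal)
  finally show "emeasure (std_gauss :: (real^'n) measure) (space std_gauss) = 1" .
qed

text \<open>The standard Gaussian measure is rotation invariant, since its density is radial and
  Lebesgue measure is rotation invariant.\<close>
lemma std_gauss_orthogonal:
  fixes Q :: "real^'n::finite \<Rightarrow> real^'n"
  assumes Q: "orthogonal_transformation Q"
  shows "distr std_gauss borel Q = std_gauss"
proof -
  have [measurable]: "Q \<in> borel_measurable borel"
    by (rule linear_borel_measurable[OF orthogonal_transformation_linear[OF Q]])
  have "density (distr lborel borel Q) (\<lambda>z. ennreal (gauss_density z))
      = distr (density lborel (\<lambda>z. ennreal (gauss_density (Q z)))) borel Q"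
    by (rule density_distr) auto
  then show ?thesis
    unfolding std_gauss_density lborel_distr_orthogonal[OF Q]
    by (simp add: gauss_density_norm orthogonal_transformation_norm[OF Q])
qed

lemma js_orthogonal:
  fixes Q :: "real^'n::finite \<Rightarrow> real^'n"
  assumes Q: "orthogonal_transformation Q"
  shows "js (Q y) = Q (js y)"
  unfolding js_def orthogonal_transformation_norm[OF Q]
  by (simp add: orthogonal_transformation_scaleR[OF Q])

lemma js_measurable [measurable]: "js \<in> borel_measurable borel"
  unfolding js_def by measurable

lemma js_risk_orthogonal:
  fixes Q :: "real^'n::finite \<Rightarrow> real^'n"
  assumes Q: "orthogonal_transformation Q"
  shows "js_risk (Q \<mu>) = js_risk \<mu>"
proof -
  have lin: "linear Q"
    using Q by (rule orthogonal_transformation_linear)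
  have [measurable]: "Q \<in> borel_measurable borel"
    by (rule linear_borel_measurable[OF lin])
  have loss: "js (Q \<mu> + Q z) - Q \<mu> = Q (js (\<mu> + z) - \<mu>)" for z
    by (simp add: linear_add[OF lin, symmetric] linear_diff[OF lin] js_orthogonal[OF Q])
  have "js_risk (Q \<mu>) = (\<integral>z. (norm (js (Q \<mu> + z) - Q \<mu>))\<^sup>2 \<partial>distr std_gauss borel Q)"
    unfolding js_risk_def std_gauss_orthogonal[OF Q] ..
  also have "\<dots> = (\<integral>z. (norm (js (Q \<mu> + Q z) - Q \<mu>))\<^sup>2 \<partial>std_gauss)"
    by (rule integral_distr) auto
  also have "\<dots> = js_risk \<mu>"
    by (simp only: js_risk_def loss orthogonal_transformation_norm[OF Q])
  finally show ?thesis .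
qed

text \<open>Every vector is the image of a multiple of a fixed unit vector under a rotation,
  so the risk is a function of the norm of the mean alone.\<close>
lemma js_risk_radial:
  fixes \<mu> :: "real^'n::finite" and k :: 'n
  shows "js_risk \<mu> = js_risk (norm \<mu> *\<^sub>R axis k 1)"
proof (cases "\<mu> = 0")
  case False
  have "norm (axis k (1::real)) = 1"
    by (rule norm_axis_1)
  moreover have "norm (\<mu> /\<^sub>R norm \<mu>) = 1"
    using False by simp
  ultimately obtain Q where Q: "orthogonal_transformation Q" "Q (axis k (1::real)) = \<mu> /\<^sub>R norm \<mu>"
    by (rule orthogonal_transformation_exists_1)
  have "Q (norm \<mu> *\<^sub>R axis k 1) = norm \<mu> *\<^sub>R Q (axis k 1)"
    by (rule orthogonal_transformation_scaleR[OF Q(1)])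
  also have "\<dots> = \<mu>"
    unfolding Q(2) using False by simp
  finally show ?thesis
    using js_risk_orthogonal[OF Q(1), of "norm \<mu> *\<^sub>R axis k 1"] by simp
qed simp

definition vec_upd :: "real^'n::finite \<Rightarrow> 'n \<Rightarrow> real \<Rightarrow> real^'n" where
  "vec_upd z i t = (\<chi> j. if j = i then t else z $ j)"

lemma vec_upd_nth [simp]: "vec_upd z i t $ j = (if j = i then t else z $ j)"
  unfolding vec_upd_def by simp

lemma inner_vec_upd: "vec_upd z i t \<bullet> vec_upd w i s = z \<bullet> w - z $ i * w $ i + t * s"
proof -
  have "vec_upd z i t \<bullet> vec_upd w i s = t * s + (\<Sum>j\<in>UNIV - {i}. z $ j * w $ j)"
    unfolding inner_vec_def by (subst sum.remove[of UNIV i]) (auto intro!: sum.cong)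
  moreover have "z \<bullet> w = z $ i * w $ i + (\<Sum>j\<in>UNIV - {i}. z $ j * w $ j)"
    unfolding inner_vec_def using sum.remove[of UNIV i "\<lambda>j. z $ j * w $ j"] by simp
  ultimately show ?thesis
    by simp
qed

lemma norm_vec_upd: "(norm (vec_upd z i t))\<^sup>2 = (norm z)\<^sup>2 - (z $ i)\<^sup>2 + t\<^sup>2"
  unfolding power2_norm_eq_inner inner_vec_upd by (simp add: power2_eq_square)

definition coord_swap :: "'n::finite \<Rightarrow> (real^'n) \<times> real \<Rightarrow> (real^'n) \<times> real" where
  "coord_swap i p = (vec_upd (fst p) i (snd p), fst p $ i)"

lemma coord_swap_swap [simp]: "coord_swap i (coord_swap i p) = p"
  by (cases p) (simp add: coord_swap_def vec_eq_iff)

lemma coord_swap_linear: "linear (coord_swap i)"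
  by (rule linearI) (simp_all add: coord_swap_def vec_eq_iff)

lemma coord_swap_inner: "coord_swap i p \<bullet> coord_swap i q = p \<bullet> q"
  by (cases p, cases q) (simp add: coord_swap_def inner_vec_upd)

lemma coord_swap_Basis:
  assumes b: "b \<in> (Basis :: ((real^'n::finite) \<times> real) set)"
  shows "coord_swap i b \<in> Basis"
proof -
  have axis: "axis j (1::real) \<in> (Basis :: (real^'n) set)" for j
    by (auto simp: Basis_vec_def)
  from b consider j where "b = (axis j 1, 0)" | "b = (0, 1)"
    by (auto simp: Basis_prod_def Basis_vec_def)
  then show ?thesis
  proof cases
    case (1 j)
    show ?thesis
    proof (cases "j = i")
      case True
      then have "coord_swap i b = (0, 1)"
        using 1 by (simp add: coord_swap_def vec_eq_iff axis_def)
      then show ?thesis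
        by (simp add: Basis_prod_def)
    next
      case False
      then have "coord_swap i b = b"
        using 1 by (simp add: coord_swap_def vec_eq_iff axis_def)
      then show ?thesis
        using b by simp
    qed
  next
    case 2
    then have "coord_swap i b = (axis i 1, 0)"
      by (simp add: coord_swap_def vec_eq_iff axis_def)
    then show ?thesis
      by (simp add: Basis_prod_def axis)
  qed
qed

lemma coord_swap_measurable [measurable]:
  "coord_swap i \<in> borel_measurable (borel :: ((real^'n::finite) \<times> real) measure)"
  by (rule linear_borel_measurable[OF coord_swap_linear])

lemma lborel_distr_coord_swap:
  "distr lborel borel (coord_swap i) = (lborel :: ((real^'n::finite) \<times> real) measure)"
proof (rule lborel_distr_basis_isometry[OF coord_swap_linear coord_swap_inner])
  show "bij_betw (coord_swap i) Basis (Basis :: ((real^'n) \<times> real) set)"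
    by (rule bij_betw_byWitness[where f'="coord_swap i"])
      (auto intro: coord_swap_Basis simp: image_subset_iff)
qed

lemma sets_std_gauss_pair [measurable_cong]:
  "sets (std_gauss \<Otimes>\<^sub>M std_normal) = sets (borel :: ((real^'n::finite) \<times> real) measure)"
  by (simp add: borel_prod[symmetric] cong: sets_pair_measure_cong)

lemma std_gauss_pair_density:
  "std_gauss \<Otimes>\<^sub>M std_normal =
     density lborel (\<lambda>p::(real^'n::finite) \<times> real. ennreal (gauss_density (fst p) * std_normal_density (snd p)))"
proof -
  have "sigma_finite_measure std_normal"
    using prob_space_std_normal by (simp add: prob_space_imp_sigma_finite)
  then have "std_gauss \<Otimes>\<^sub>M std_normal = density (lborel \<Otimes>\<^sub>M lborel)
      (\<lambda>(z, t). ennreal (gauss_density (z :: real^'n)) * ennreal (std_normal_density t))"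
    unfolding std_gauss_density std_normal_def
    by (intro pair_measure_density) (auto simp: lborel.sigma_finite_measure_axioms std_normal_def)
  also have "\<dots> = density lborel (\<lambda>p. ennreal (gauss_density (fst p) * std_normal_density (snd p)))"
    by (simp add: lborel_prod case_prod_unfold ennreal_mult'[symmetric] gauss_density_def prod_nonneg)
  finally show ?thesis .
qed

text \<open>The product of \<open>std_gauss\<close> with an independent standard normal coordinate is the
  standard Gaussian on \<open>\<real>^n \<times> \<real>\<close>, hence invariant under \<open>coord_swap\<close>.\<close>
lemma std_gauss_pair_coord_swap:
  "distr (std_gauss \<Otimes>\<^sub>M std_normal) borel (coord_swap i)
     = (std_gauss \<Otimes>\<^sub>M std_normal :: ((real^'n::finite) \<times> real) measure)"
proof -
  define w :: "(real^'n) \<times> real \<Rightarrow> real" where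
    "w p = gauss_density (fst p) * std_normal_density (snd p)" for p
  have [measurable]: "w \<in> borel_measurable borel"
    unfolding w_def borel_prod[symmetric] by measurable
  have w_swap: "w (coord_swap i p) = w p" for p
    by (cases p) (simp add: w_def coord_swap_def gauss_density_norm norm_vec_upd
        std_normal_density_def exp_add[symmetric] field_simps)
  have "density (distr lborel borel (coord_swap i)) (\<lambda>p. ennreal (w p))
      = distr (density lborel (\<lambda>p. ennreal (w (coord_swap i p)))) borel (coord_swap i)"
    by (rule density_distr) auto
  then show ?thesis
    unfolding std_gauss_pair_density w_def[symmetric] lborel_distr_coord_swap w_swap by simp
qed

lemma resample_measurable [measurable]:
  "(\<lambda>p. vec_upd (fst p) i (snd p)) \<in> borel_measurable (borel :: ((real^'n::finite) \<times> real) measure)"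
proof -
  have "linear (\<lambda>p::(real^'n) \<times> real. vec_upd (fst p) i (snd p))"
    by (rule linearI) (simp_all add: vec_eq_iff)
  then show ?thesis
    by (rule linear_borel_measurable)
qed

lemma distr_resample:
  "distr (std_gauss \<Otimes>\<^sub>M std_normal) std_gauss (\<lambda>p. vec_upd (fst p) i (snd p))
     = (std_gauss :: (real^'n::finite) measure)"
proof -
  interpret N: prob_space std_normal
    by (rule prob_space_std_normal)
  let ?GN = "std_gauss \<Otimes>\<^sub>M std_normal :: ((real^'n) \<times> real) measure"
  have "distr ?GN std_gauss (\<lambda>p. vec_upd (fst p) i (snd p)) = distr (distr ?GN ?GN (coord_swap i)) std_gauss fst"
    by (simp add: distr_distr comp_def coord_swap_def)
  also have "distr ?GN ?GN (coord_swap i) = ?GN"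
    using std_gauss_pair_coord_swap[of i] by (simp add: distr_cong[OF refl sets_std_gauss_pair[symmetric]])
  finally show ?thesis
    by (simp add: N.distr_pair_fst)
qed

lemma resample_nn_integral:
  fixes f :: "real^'n::finite \<Rightarrow> ennreal"
  assumes [measurable]: "f \<in> borel_measurable borel"
  shows "(\<integral>\<^sup>+ z. f z \<partial>std_gauss) = (\<integral>\<^sup>+ z. (\<integral>\<^sup>+ t. f (vec_upd z i t) \<partial>std_normal) \<partial>std_gauss)"
proof -
  interpret N: prob_space std_normal
    by (rule prob_space_std_normal)
  have "(\<integral>\<^sup>+ z. f z \<partial>std_gauss) = (\<integral>\<^sup>+ p. f (vec_upd (fst p) i (snd p)) \<partial>(std_gauss \<Otimes>\<^sub>M std_normal))"
    by (subst distr_resample[of i, symmetric]) (simp add: nn_integral_distr)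
  also have "\<dots> = (\<integral>\<^sup>+ z. (\<integral>\<^sup>+ t. f (vec_upd z i t) \<partial>std_normal) \<partial>std_gauss)"
    by (rule N.nn_integral_fst[symmetric, where f="\<lambda>p. f (vec_upd (fst p) i (snd p))", simplified]) measurable
  finally show ?thesis .
qed

lemma resample_integral:
  fixes f :: "real^'n::finite \<Rightarrow> real"
  assumes f: "integrable std_gauss f"
  shows "(\<integral>z. f z \<partial>std_gauss) = (\<integral>z. (\<integral>t. f (vec_upd z i t) \<partial>std_normal) \<partial>std_gauss)"
    and "integrable std_gauss (\<lambda>z. \<integral>t. f (vec_upd z i t) \<partial>std_normal)"
proof -
  interpret GN: pair_sigma_finite "std_gauss :: (real^'n) measure" std_normal
    unfolding pair_sigma_finite_def
    using prob_space_imp_sigma_finite[OF prob_space_std_gauss] prob_space_imp_sigma_finite[OF prob_space_std_normal]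
    by blast
  have "integrable (distr (std_gauss \<Otimes>\<^sub>M std_normal) std_gauss (\<lambda>p. vec_upd (fst p) i (snd p))) f"
    using f by (simp add: distr_resample)
  then have int: "integrable (std_gauss \<Otimes>\<^sub>M std_normal) (\<lambda>p. f (vec_upd (fst p) i (snd p)))"
    using f by (simp add: integrable_distr_eq)
  have "(\<integral>z. f z \<partial>std_gauss) = (\<integral>p. f (vec_upd (fst p) i (snd p)) \<partial>(std_gauss \<Otimes>\<^sub>M std_normal))"
    using f by (subst distr_resample[of i, symmetric]) (simp add: integral_distr)
  also have "\<dots> = (\<integral>z. (\<integral>t. f (vec_upd z i t) \<partial>std_normal) \<partial>std_gauss)"
    using GN.integral_fst'[OF int] by simp
  finally show "(\<integral>z. f z \<partial>std_gauss) = (\<integral>z. (\<integral>t. f (vec_upd z i t) \<partial>std_normal) \<partial>std_gauss)" .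
  show "integrable std_gauss (\<lambda>z. \<integral>t. f (vec_upd z i t) \<partial>std_normal)"
    using GN.integrable_fst'[OF int] by simp
qed

text \<open>If \<open>F\<close> vanishes at \<open>\<plusminus>\<infinity>\<close> and is an antiderivative of an integrable \<open>F'\<close> away from a
  finite set, then \<open>\<integral> F' = 0\<close> (fundamental theorem of calculus on \<open>[-n, n]\<close>, then
  dominated convergence).\<close>
lemma integral_deriv_eq_zero:
  fixes F F' :: "real \<Rightarrow> real"
  assumes S: "finite S" and cont: "continuous_on UNIV F"
    and deriv: "\<And>x. x \<notin> S \<Longrightarrow> (F has_real_derivative F' x) (at x)"
    and int: "integrable lborel F'"
    and top: "(F \<longlongrightarrow> 0) at_top" and bot: "(F \<longlongrightarrow> 0) at_bot"
  shows "integral\<^sup>L lborel F' = 0"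
proof -
  define F'_trunc where "F'_trunc n x = indicator {- real n .. real n} x * F' x" for n :: nat and x
  have [measurable]: "F' \<in> borel_measurable borel"
    using borel_measurable_integrable[OF int] by simp
  have [measurable]: "F'_trunc n \<in> borel_measurable borel" for n
    unfolding F'_trunc_def by measurable
  have lim: "(\<lambda>n. integral\<^sup>L lborel (F'_trunc n)) \<longlonglongrightarrow> integral\<^sup>L lborel F'"
  proof (rule integral_dominated_convergence[where w="\<lambda>x. norm (F' x)"])
    show "AE x in lborel. (\<lambda>n. F'_trunc n x) \<longlonglongrightarrow> F' x"
    proof (rule AE_I2)
      fix x :: real
      obtain N :: nat where "\<bar>x\<bar> \<le> real N"
        using real_arch_simple by blast
      then have "eventually (\<lambda>n. F'_trunc n x = F' x) sequentially"
        unfolding eventually_sequentially F'_trunc_def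
        by (intro exI[of _ N]) (auto simp: indicator_def)
      then show "(\<lambda>n. F'_trunc n x) \<longlonglongrightarrow> F' x"
        by (rule tendsto_eventually)
    qed
  qed (use int in \<open>auto simp: F'_trunc_def indicator_def\<close>)
  have ftc: "integral\<^sup>L lborel (F'_trunc n) = F (real n) - F (- real n)" for n
  proof -
    have "set_integrable lborel {- real n .. real n} F'"
      unfolding set_integrable_def by (rule integrable_mult_indicator) (auto simp: int)
    moreover have "integral\<^sup>L lborel (F'_trunc n) = (LINT x:{- real n .. real n}|lborel. F' x)"
      unfolding F'_trunc_def set_lebesgue_integral_def by simp
    ultimately have "integral\<^sup>L lborel (F'_trunc n) = integral {- real n .. real n} F'"
      using set_borel_integral_eq_integral(2) by simp
    also have "\<dots> = F (real n) - F (- real n)"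
    proof (rule integral_unique, rule fundamental_theorem_of_calculus_interior_strong[OF S])
      show "(F has_vector_derivative F' x) (at x)" if "x \<in> {- real n<..<real n} - S" for x
        using deriv[of x] that by (simp add: has_real_derivative_iff_has_vector_derivative)
    qed (use cont continuous_on_subset in auto)
    finally show ?thesis .
  qed
  have "(\<lambda>n. F (real n)) \<longlonglongrightarrow> 0"
    by (rule filterlim_compose[OF top filterlim_real_sequentially])
  moreover have "(\<lambda>n. F (- real n)) \<longlonglongrightarrow> 0"
    by (rule filterlim_compose[OF bot filterlim_compose[OF filterlim_uminus_at_bot_at_top filterlim_real_sequentially]])
  ultimately have "(\<lambda>n. integral\<^sup>L lborel (F'_trunc n)) \<longlonglongrightarrow> 0"
    unfolding ftc using tendsto_diff by fastforce
  then show ?thesis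
    using lim LIMSEQ_unique by blast
qed

lemma integrable_std_normal_iff:
  fixes f :: "real \<Rightarrow> real"
  assumes [measurable]: "f \<in> borel_measurable borel"
  shows "integrable std_normal f \<longleftrightarrow> integrable lborel (\<lambda>x. std_normal_density x * f x)"
  unfolding std_normal_def by (subst integrable_density) auto

lemma integral_std_normal:
  fixes f :: "real \<Rightarrow> real"
  assumes [measurable]: "f \<in> borel_measurable borel"
  shows "(\<integral>x. f x \<partial>std_normal) = (\<integral>x. std_normal_density x * f x \<partial>lborel)"
  unfolding std_normal_def by (subst integral_density) auto

lemma std_normal_density_deriv:
  "(std_normal_density has_real_derivative (- x * std_normal_density x)) (at x)"
  unfolding std_normal_density_def
  by (auto intro!: derivative_eq_intros simp: field_simps power2_eq_square)

lemma std_normal_density_tails: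
  "((\<lambda>x. (A + B * x) * std_normal_density x) \<longlongrightarrow> 0) at_top"
  "((\<lambda>x. (A - B * x) * std_normal_density x) \<longlongrightarrow> 0) at_bot"
  unfolding std_normal_density_def by real_asymp+

text \<open>It follows by integrating the derivative of \<open>H \<phi>\<close> over the line.\<close>
lemma stein_lemma:
  fixes H D :: "real \<Rightarrow> real"
  assumes S: "finite S" and cont: "continuous_on UNIV H"
    and deriv: "\<And>x. x \<notin> S \<Longrightarrow> (H has_real_derivative D x) (at x)"
    and [measurable]: "D \<in> borel_measurable borel"
    and D_bound: "\<And>x. \<bar>D x\<bar> \<le> C"
    and H_bound: "\<And>x. \<bar>H x\<bar> \<le> A + B * \<bar>x\<bar>" and B: "0 \<le> B"
  shows "integrable std_normal (\<lambda>x. x * H x)" "integrable std_normal D"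
    "(\<integral>x. x * H x \<partial>std_normal) = (\<integral>x. D x \<partial>std_normal)"
proof -
  have [measurable]: "H \<in> borel_measurable borel"
    by (rule borel_measurable_continuous_onI[OF cont])
  have int_D: "integrable lborel (\<lambda>x. std_normal_density x * D x)"
  proof (rule Bochner_Integration.integrable_bound[where f="\<lambda>x. C * std_normal_density x"])
    show "AE x in lborel. norm (std_normal_density x * D x) \<le> norm (C * std_normal_density x)"
    proof (rule AE_I2)
      fix x
      have "std_normal_density x * \<bar>D x\<bar> \<le> std_normal_density x * \<bar>C\<bar>"
        using D_bound[of x] by (intro mult_left_mono) auto
      then show "norm (std_normal_density x * D x) \<le> norm (C * std_normal_density x)"
        by (simp add: abs_mult mult_ac)
    qed
  qed simp_all
  have int_xH: "integrable lborel (\<lambda>x. std_normal_density x * (x * H x))"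
  proof (rule Bochner_Integration.integrable_bound[where
        f="\<lambda>x. A * (std_normal_density x * \<bar>x\<bar> ^ 1) + B * (std_normal_density x * x ^ 2)"])
    show "integrable lborel (\<lambda>x. A * (std_normal_density x * \<bar>x\<bar> ^ 1) + B * (std_normal_density x * x ^ 2))"
      by (intro Bochner_Integration.integrable_add integrable_mult_right
          integrable_std_normal_moment_abs integrable_std_normal_moment)
    show "AE x in lborel. norm (std_normal_density x * (x * H x)) \<le>
        norm (A * (std_normal_density x * \<bar>x\<bar> ^ 1) + B * (std_normal_density x * x ^ 2))"
    proof (rule AE_I2)
      fix x
      have "\<bar>x * H x\<bar> \<le> A * \<bar>x\<bar> + B * x\<^sup>2"
        using mult_left_mono[OF H_bound[of x], of "\<bar>x\<bar>"]
        by (simp add: abs_mult algebra_simps power2_eq_square abs_mult_self_eq)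
      then have "std_normal_density x * \<bar>x * H x\<bar> \<le> std_normal_density x * (A * \<bar>x\<bar> + B * x\<^sup>2)"
        by (rule mult_left_mono) simp
      then show "norm (std_normal_density x * (x * H x)) \<le>
          norm (A * (std_normal_density x * \<bar>x\<bar> ^ 1) + B * (std_normal_density x * x ^ 2))"
        by (simp add: abs_mult algebra_simps)
    qed
  qed simp
  define F where "F x = H x * std_normal_density x" for x
  have F_bound: "\<bar>F x\<bar> \<le> (A + B * \<bar>x\<bar>) * std_normal_density x" for x
    using mult_right_mono[OF H_bound[of x], of "std_normal_density x"] unfolding F_def abs_mult by simp
  have top: "(F \<longlongrightarrow> 0) at_top"
  proof (rule Lim_null_comparison[OF _ std_normal_density_tails(1)])
    show "\<forall>\<^sub>F x in at_top. norm (F x) \<le> (A + B * x) * std_normal_density x"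
      using eventually_ge_at_top[of 0]
    proof eventually_elim
      case (elim x)
      then show ?case
        using F_bound[of x] abs_of_nonneg[of x] by simp
    qed
  qed
  have bot: "(F \<longlongrightarrow> 0) at_bot"
  proof (rule Lim_null_comparison[OF _ std_normal_density_tails(2)])
    show "\<forall>\<^sub>F x in at_bot. norm (F x) \<le> (A - B * x) * std_normal_density x"
      using eventually_le_at_bot[of 0]
    proof eventually_elim
      case (elim x)
      then show ?case
        using F_bound[of x] abs_of_nonpos[of x] by simp
    qed
  qed
  have deriv_F: "(F has_real_derivative std_normal_density x * D x - std_normal_density x * (x * H x)) (at x)"
    if "x \<notin> S" for x
    unfolding F_def using DERIV_mult[OF deriv[OF that] std_normal_density_deriv[of x]]
    by (simp add: algebra_simps)
  have cont_F: "continuous_on UNIV F"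
    unfolding F_def std_normal_density_def by (intro continuous_intros cont) auto
  have "(\<integral>x. std_normal_density x * D x - std_normal_density x * (x * H x) \<partial>lborel) = 0"
    using integral_deriv_eq_zero[OF S cont_F deriv_F Bochner_Integration.integrable_diff[OF int_D int_xH] top bot]
    by blast
  then show "(\<integral>x. x * H x \<partial>std_normal) = (\<integral>x. D x \<partial>std_normal)"
    using Bochner_Integration.integral_diff[OF int_D int_xH] by (simp add: integral_std_normal)
  show "integrable std_normal (\<lambda>x. x * H x)" "integrable std_normal D"
    using int_D int_xH by (simp_all add: integrable_std_normal_iff)
qed

lemma std_gauss_coord_sq:
  "integrable std_gauss (\<lambda>z::real^'n::finite. (z $ i)\<^sup>2)" "(\<integral>z. (z $ i)\<^sup>2 \<partial>std_gauss) = 1"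
proof -
  interpret G: prob_space "std_gauss :: (real^'n) measure"
    by (rule prob_space_std_gauss)
  have "has_bochner_integral lborel (\<lambda>x. std_normal_density x * x ^ (2 * 1)) (fact (2 * 1) / (2 ^ 1 * fact 1))"
    by (rule std_normal_moment_even)
  then have "integrable std_normal (\<lambda>t. t\<^sup>2)" "(\<integral>t. t\<^sup>2 \<partial>std_normal) = 1"
    by (simp_all add: integrable_std_normal_iff integral_std_normal has_bochner_integral_iff)
  then have normal: "(\<integral>\<^sup>+ t. ennreal (t\<^sup>2) \<partial>std_normal) = 1"
    by (simp add: nn_integral_eq_integral)
  have "(\<integral>\<^sup>+ z. ennreal ((z $ i)\<^sup>2) \<partial>(std_gauss :: (real^'n) measure))
      = (\<integral>\<^sup>+ z. (\<integral>\<^sup>+ t. ennreal ((vec_upd z i t $ i)\<^sup>2) \<partial>std_normal) \<partial>std_gauss)"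
    by (rule resample_nn_integral) measurable
  also have "\<dots> = 1"
    by (simp add: normal G.emeasure_space_1[simplified])
  finally have nn: "(\<integral>\<^sup>+ z. ennreal ((z $ i)\<^sup>2) \<partial>(std_gauss :: (real^'n) measure)) = 1" .
  show "integrable std_gauss (\<lambda>z::real^'n. (z $ i)\<^sup>2)"
    by (rule integrableI_nn_integral_finite[where x=1]) (auto simp: nn)
  show "(\<integral>z. (z $ i)\<^sup>2 \<partial>(std_gauss :: (real^'n) measure)) = 1"
    by (subst integral_eq_nn_integral) (auto simp: nn)
qed

lemma integrable_std_gauss_quadratic:
  fixes f :: "real^'n::finite \<Rightarrow> real"
  assumes [measurable]: "f \<in> borel_measurable borel"
    and bound: "\<And>z. \<bar>f z\<bar> \<le> C + D * (norm z)\<^sup>2"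
  shows "integrable std_gauss f"
proof (rule Bochner_Integration.integrable_bound[where f="\<lambda>z. C + D * (norm z)\<^sup>2"])
  interpret G: prob_space "std_gauss :: (real^'n) measure"
    by (rule prob_space_std_gauss)
  show "integrable std_gauss (\<lambda>z::real^'n. C + D * (norm z)\<^sup>2)"
    unfolding norm_sq_vec
    by (intro Bochner_Integration.integrable_add integrable_mult_right Bochner_Integration.integrable_sum
        std_gauss_coord_sq(1)) simp
  show "AE z in std_gauss. norm (f z) \<le> norm (C + D * (norm z)\<^sup>2)"
    using bound by (auto intro: order_trans[OF _ abs_ge_self])
qed simp

lemma coord_sq_le_norm_sq: "(z $ i)\<^sup>2 \<le> (norm (z :: real^'n::finite))\<^sup>2"
  using norm_vec_upd[of z i 0] zero_le_power2[of "norm (vec_upd z i 0)"] by simp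

lemma abs_mult_shift_le: "\<bar>a\<bar> * \<bar>a + b\<bar> \<le> 3 * a\<^sup>2 + 2 * (b :: real)\<^sup>2"
proof -
  have "\<bar>a\<bar> * \<bar>a + b\<bar> \<le> \<bar>a\<bar> * (\<bar>a\<bar> + \<bar>b\<bar>)"
    by (rule mult_left_mono) (simp_all add: abs_triangle_ineq)
  also have "\<dots> = a\<^sup>2 + \<bar>a\<bar> * \<bar>b\<bar>"
    by (simp add: algebra_simps power2_eq_square abs_mult_self_eq)
  also have "\<dots> \<le> 3 * a\<^sup>2 + 2 * b\<^sup>2"
    using zero_le_power2[of "\<bar>a\<bar> - \<bar>b\<bar>"] zero_le_power2[of a] zero_le_power2[of b]
    unfolding power2_diff power2_abs by linarith
  finally show ?thesis .
qed

text \<open>The exceptional set of the one-dimensional sections stays finite.\<close>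
lemma finite_shifted_square_preimage:
  assumes "finite S"
  shows "finite {t :: real. a + (b + t)\<^sup>2 \<in> S}"
proof (rule finite_subset)
  show "{t. a + (b + t)\<^sup>2 \<in> S} \<subseteq> (\<lambda>s. sqrt (s - a) - b) ` S \<union> (\<lambda>s. - sqrt (s - a) - b) ` S"
  proof
    fix t assume "t \<in> {t. a + (b + t)\<^sup>2 \<in> S}"
    then have "a + (b + t)\<^sup>2 \<in> S" and "\<bar>b + t\<bar> = sqrt (a + (b + t)\<^sup>2 - a)"
      by simp_all
    then show "t \<in> (\<lambda>s. sqrt (s - a) - b) ` S \<union> (\<lambda>s. - sqrt (s - a) - b) ` S"
      by (cases "0 \<le> b + t") (force simp: image_iff)+
  qed
qed (use assms in simp)

text \<open>Stein's identity along one coordinate for a radial shrinkage field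
  \<open>y \<mapsto> \<phi>(\<parallel>y\<parallel>\<^sup>2) y\<close>: the \<open>i\<close>-th partial derivative of its \<open>i\<close>-th component is
  \<open>\<phi>(\<parallel>y\<parallel>\<^sup>2) + 2 \<phi>'(\<parallel>y\<parallel>\<^sup>2) y\<^sub>i\<^sup>2\<close>.  Resampling the \<open>i\<close>-th coordinate reduces it to
  the one-dimensional identity.\<close>
lemma stein_radial_coordinate:
  fixes \<phi> \<phi>' :: "real \<Rightarrow> real" and \<mu> :: "real^'n::finite" and i :: 'n
  assumes cont: "continuous_on UNIV \<phi>" and S: "finite S"
    and deriv: "\<And>t. t \<notin> S \<Longrightarrow> (\<phi> has_real_derivative \<phi>' t) (at t)"
    and [measurable]: "\<phi>' \<in> borel_measurable borel"
    and bound: "\<And>t. \<bar>\<phi> t\<bar> \<le> K" and deriv_bound: "\<And>t. 0 \<le> t \<Longrightarrow> \<bar>t * \<phi>' t\<bar> \<le> K'"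
  defines "D \<equiv> \<lambda>y. \<phi> ((norm y)\<^sup>2) + 2 * \<phi>' ((norm y)\<^sup>2) * (y $ i)\<^sup>2"
  shows "integrable std_gauss (\<lambda>z. z $ i * (\<phi> ((norm (\<mu> + z))\<^sup>2) * (\<mu> + z) $ i))"
    and "integrable std_gauss (\<lambda>z. D (\<mu> + z))"
    and "(\<integral>z. z $ i * (\<phi> ((norm (\<mu> + z))\<^sup>2) * (\<mu> + z) $ i) \<partial>std_gauss) = (\<integral>z. D (\<mu> + z) \<partial>std_gauss)"
proof -
  have [measurable]: "\<phi> \<in> borel_measurable borel"
    by (rule borel_measurable_continuous_onI[OF cont])
  have K: "0 \<le> K"
    using bound[of 0] by linarith
  have D_bound: "\<bar>\<phi> (a + u\<^sup>2) + 2 * \<phi>' (a + u\<^sup>2) * u\<^sup>2\<bar> \<le> K + 2 * K'" if "0 \<le> a" for a u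
  proof -
    have "\<bar>\<phi>' (a + u\<^sup>2) * u\<^sup>2\<bar> \<le> \<bar>(a + u\<^sup>2) * \<phi>' (a + u\<^sup>2)\<bar>"
      using that by (simp add: abs_mult mult.commute mult_right_mono)
    also have "\<dots> \<le> K'"
      using that by (intro deriv_bound) simp
    finally have "\<bar>2 * \<phi>' (a + u\<^sup>2) * u\<^sup>2\<bar> \<le> 2 * K'"
      by (simp add: abs_mult)
    then show ?thesis
      using bound[of "a + u\<^sup>2"] abs_triangle_ineq[of "\<phi> (a + u\<^sup>2)" "2 * \<phi>' (a + u\<^sup>2) * u\<^sup>2"]
      by linarith
  qed
  text \<open>The one-dimensional identity, for the other coordinates frozen.\<close>
  have stein1: "(\<integral>t. t * (\<phi> (a + (b + t)\<^sup>2) * (b + t)) \<partial>std_normal)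
      = (\<integral>t. \<phi> (a + (b + t)\<^sup>2) + 2 * \<phi>' (a + (b + t)\<^sup>2) * (b + t)\<^sup>2 \<partial>std_normal)"
    if "0 \<le> a" for a b
  proof (rule stein_lemma(3))
    show "finite {t. a + (b + t)\<^sup>2 \<in> S}"
      by (rule finite_shifted_square_preimage[OF S])
    show "continuous_on UNIV (\<lambda>t. \<phi> (a + (b + t)\<^sup>2) * (b + t))"
      by (intro continuous_intros continuous_on_compose2[OF cont]) auto
    show "((\<lambda>t. \<phi> (a + (b + t)\<^sup>2) * (b + t)) has_real_derivative
        \<phi> (a + (b + t)\<^sup>2) + 2 * \<phi>' (a + (b + t)\<^sup>2) * (b + t)\<^sup>2) (at t)"
      if "t \<notin> {t. a + (b + t)\<^sup>2 \<in> S}" for t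
      using that by (auto intro!: derivative_eq_intros DERIV_chain2[OF deriv] simp: power2_eq_square algebra_simps)
    show "\<bar>\<phi> (a + (b + t)\<^sup>2) + 2 * \<phi>' (a + (b + t)\<^sup>2) * (b + t)\<^sup>2\<bar> \<le> K + 2 * K'" for t
      by (rule D_bound[OF that])
    show "\<bar>\<phi> (a + (b + t)\<^sup>2) * (b + t)\<bar> \<le> K * \<bar>b\<bar> + K * \<bar>t\<bar>" for t
    proof -
      have "\<bar>\<phi> (a + (b + t)\<^sup>2) * (b + t)\<bar> \<le> K * (\<bar>b\<bar> + \<bar>t\<bar>)"
        unfolding abs_mult by (rule mult_mono[OF bound abs_triangle_ineq K]) simp
      then show ?thesis
        by (simp only: distrib_left)
    qed
  qed (use K in simp_all)
  have D_bound': "\<bar>D y\<bar> \<le> K + 2 * K'" for y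
    using D_bound[of "(norm y)\<^sup>2 - (y $ i)\<^sup>2" "y $ i"] coord_sq_le_norm_sq[of y i]
    unfolding D_def by simp
  show int1: "integrable std_gauss (\<lambda>z. z $ i * (\<phi> ((norm (\<mu> + z))\<^sup>2) * (\<mu> + z) $ i))"
  proof (rule integrable_std_gauss_quadratic[where C="2 * K * (\<mu> $ i)\<^sup>2" and D="3 * K"])
    fix z :: "real^'n"
    have "\<bar>z $ i\<bar> * \<bar>\<mu> $ i + z $ i\<bar> \<le> 2 * (\<mu> $ i)\<^sup>2 + 3 * (z $ i)\<^sup>2"
      using abs_mult_shift_le[of "z $ i" "\<mu> $ i"] by (simp add: add.commute)
    also have "\<dots> \<le> 2 * (\<mu> $ i)\<^sup>2 + 3 * (norm z)\<^sup>2"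
      using coord_sq_le_norm_sq[of z i] by simp
    finally have "\<bar>\<phi> ((norm (\<mu> + z))\<^sup>2)\<bar> * (\<bar>z $ i\<bar> * \<bar>\<mu> $ i + z $ i\<bar>) \<le> K * (2 * (\<mu> $ i)\<^sup>2 + 3 * (norm z)\<^sup>2)"
      by (rule mult_mono[OF bound]) (use K in simp_all)
    moreover have "\<bar>z $ i * (\<phi> ((norm (\<mu> + z))\<^sup>2) * (\<mu> + z) $ i)\<bar>
        = \<bar>\<phi> ((norm (\<mu> + z))\<^sup>2)\<bar> * (\<bar>z $ i\<bar> * \<bar>\<mu> $ i + z $ i\<bar>)"
      by (simp add: abs_mult)
    ultimately show "\<bar>z $ i * (\<phi> ((norm (\<mu> + z))\<^sup>2) * (\<mu> + z) $ i)\<bar> \<le> 2 * K * (\<mu> $ i)\<^sup>2 + 3 * K * (norm z)\<^sup>2"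
      by (simp add: distrib_left)
  qed simp
  show int2: "integrable std_gauss (\<lambda>z. D (\<mu> + z))"
  proof (rule integrable_std_gauss_quadratic[where C="K + 2 * K'" and D=0])
    show "\<bar>D (\<mu> + z)\<bar> \<le> K + 2 * K' + 0 * (norm z)\<^sup>2" for z
      using D_bound' by simp
  qed (simp add: D_def)
  define a where "a z = (norm (\<mu> + z))\<^sup>2 - ((\<mu> + z) $ i)\<^sup>2" for z :: "real^'n"
  have a: "0 \<le> a z" for z
    unfolding a_def using coord_sq_le_norm_sq[of "\<mu> + z" i] by simp
  have resampled: "(norm (\<mu> + vec_upd z i t))\<^sup>2 = a z + (\<mu> $ i + t)\<^sup>2"
    "(\<mu> + vec_upd z i t) $ i = \<mu> $ i + t" for z t
  proof -
    have "\<mu> + vec_upd z i t = vec_upd (\<mu> + z) i (\<mu> $ i + t)"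
      by (simp add: vec_eq_iff)
    then show "(norm (\<mu> + vec_upd z i t))\<^sup>2 = a z + (\<mu> $ i + t)\<^sup>2"
      by (simp add: norm_vec_upd a_def)
  qed simp
  have "(\<integral>z. z $ i * (\<phi> ((norm (\<mu> + z))\<^sup>2) * (\<mu> + z) $ i) \<partial>std_gauss)
      = (\<integral>z. (\<integral>t. t * (\<phi> (a z + (\<mu> $ i + t)\<^sup>2) * (\<mu> $ i + t)) \<partial>std_normal) \<partial>std_gauss)"
    unfolding resample_integral(1)[OF int1, where i=i] resampled by simp
  also have "\<dots> = (\<integral>z. (\<integral>t. D (\<mu> + vec_upd z i t) \<partial>std_normal) \<partial>std_gauss)"
    unfolding D_def resampled stein1[OF a] ..
  also have "\<dots> = (\<integral>z. D (\<mu> + z) \<partial>std_gauss)"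
    by (rule resample_integral(1)[OF int2, where i=i, symmetric])
  finally show "(\<integral>z. z $ i * (\<phi> ((norm (\<mu> + z))\<^sup>2) * (\<mu> + z) $ i) \<partial>std_gauss) = (\<integral>z. D (\<mu> + z) \<partial>std_gauss)" .
qed

definition js_shrink :: "real \<Rightarrow> real \<Rightarrow> real" where
  "js_shrink c t = c / max t c"

definition js_shrink' :: "real \<Rightarrow> real \<Rightarrow> real" where
  "js_shrink' c t = (if t \<le> c then 0 else - c / t\<^sup>2)"

lemma js_shrink_measurable [measurable]: "js_shrink c \<in> borel_measurable borel"
  unfolding js_shrink_def by measurable

lemma js_shrink'_measurable [measurable]: "js_shrink' c \<in> borel_measurable borel"
  unfolding js_shrink'_def by measurable

lemma js_shrink_le: "0 < c \<Longrightarrow> t \<le> c \<Longrightarrow> js_shrink c t = 1"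
  unfolding js_shrink_def by (simp add: max_def)

lemma js_shrink_gt: "0 < c \<Longrightarrow> c < t \<Longrightarrow> js_shrink c t = c / t"
  unfolding js_shrink_def by (simp add: max_def)

lemma js_shrink_bound: "0 < c \<Longrightarrow> \<bar>js_shrink c t\<bar> \<le> 1"
  unfolding js_shrink_def by (auto simp: divide_le_eq_1)

lemma js_shrink'_bound:
  assumes "0 < c" "0 \<le> t"
  shows "\<bar>t * js_shrink' c t\<bar> \<le> 1"
proof (cases "t \<le> c")
  case False
  then show ?thesis
    using assms by (simp add: js_shrink'_def abs_mult power2_eq_square)
qed (simp add: js_shrink'_def)

lemma js_shrink_continuous: "0 < c \<Longrightarrow> continuous_on UNIV (js_shrink c)"
  unfolding js_shrink_def by (intro continuous_intros) (auto simp: max_def)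

lemma js_shrink_deriv:
  assumes c: "0 < c" and t: "t \<noteq> c"
  shows "(js_shrink c has_real_derivative js_shrink' c t) (at t)"
proof (cases "t < c")
  case True
  have "((\<lambda>_. 1) has_real_derivative js_shrink' c t) (at t)"
    using True by (simp add: js_shrink'_def)
  then show ?thesis
    by (rule has_field_derivative_transform_within_open[where S="{..<c}"])
      (use True c in \<open>auto simp: js_shrink_le\<close>)
next
  case False
  then have t: "c < t"
    using \<open>t \<noteq> c\<close> by simp
  have "((\<lambda>t. c / t) has_real_derivative js_shrink' c t) (at t)"
    using t c by (auto intro!: derivative_eq_intros simp: js_shrink'_def power2_eq_square)
  then show ?thesis
    by (rule has_field_derivative_transform_within_open[where S="{c<..}"])
      (use t c in \<open>auto simp: js_shrink_gt\<close>)
qed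

lemma js_eq_shrink:
  assumes "0 < real CARD('n::finite) - 2"
  shows "js (y :: real^'n) = y - js_shrink (real CARD('n) - 2) ((norm y)\<^sup>2) *\<^sub>R y"
proof (cases "y = 0")
  case False
  let ?c = "real CARD('n) - 2" and ?t = "(norm y)\<^sup>2"
  have "max 0 (1 - ?c / ?t) = 1 - js_shrink ?c ?t"
    using False assms by (cases "?t \<le> ?c") (simp_all add: js_shrink_le js_shrink_gt field_simps)
  then show ?thesis
    unfolding js_def by (simp add: scaleR_diff_left)
qed (simp add: js_def)

text \<open>Stein's unbiased risk estimate of the positive-part James--Stein rule, as a function
  of \<open>t = \<parallel>y\<parallel>\<^sup>2\<close>; here \<open>c = B - 2\<close>.\<close>
definition js_sure :: "real \<Rightarrow> real \<Rightarrow> real \<Rightarrow> real" where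
  "js_sure c B t = (if t \<le> c then t - B else B - c\<^sup>2 / t)"

lemma js_sure_measurable [measurable]: "js_sure c B \<in> borel_measurable borel"
  unfolding js_sure_def by measurable

text \<open>Summing the coordinatewise Stein expansion gives \<open>js_sure\<close>.\<close>
lemma js_sure_eq:
  assumes c: "c = B - 2" "0 < c"
  shows "B - 2 * B * js_shrink c t - 4 * t * js_shrink' c t + t * (js_shrink c t)\<^sup>2 = js_sure c B t"
proof (cases "t \<le> c")
  case False
  then have "0 < t"
    using c by simp
  moreover have B: "B = c + 2"
    using c by simp
  ultimately show ?thesis
    using c(2) False unfolding B by (simp add: js_sure_def js_shrink_gt js_shrink'_def field_simps power2_eq_square)
qed (use c in \<open>simp add: js_sure_def js_shrink_le js_shrink'_def\<close>)

text \<open>Coordinatewise, \<open>(Z\<^sub>i - s Y\<^sub>i)\<^sup>2\<close> is expanded and the cross term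
  is rewritten by Stein's identity.\<close>
theorem js_risk_sure:
  fixes \<mu> :: "real^'n::finite"
  assumes B: "CARD('n) \<ge> 3"
  shows "js_risk \<mu> = (\<integral>z. js_sure (real CARD('n) - 2) (real CARD('n)) ((norm (\<mu> + z))\<^sup>2) \<partial>std_gauss)"
proof -
  define c where "c = real CARD('n) - 2"
  have c: "0 < c"
    using B unfolding c_def by simp
  define s where "s y = js_shrink c ((norm y)\<^sup>2)" for y :: "real^'n"
  define s' where "s' y = js_shrink' c ((norm y)\<^sup>2)" for y :: "real^'n"
  define D where "D i y = s y + 2 * s' y * (y $ i)\<^sup>2" for i and y :: "real^'n"
  define g where "g i y = (s y)\<^sup>2 * (y $ i)\<^sup>2" for i and y :: "real^'n"
  have deriv: "(js_shrink c has_real_derivative js_shrink' c t) (at t)" if "t \<notin> {c}" for t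
    using that by (simp add: js_shrink_deriv[OF c])
  note stein = stein_radial_coordinate[OF js_shrink_continuous[OF c] finite.insertI[OF finite.emptyI, of c]
      deriv js_shrink'_measurable js_shrink_bound[OF c] js_shrink'_bound[OF c],
      where \<mu>=\<mu>, folded s_def s'_def D_def]
  have int_g: "integrable std_gauss (\<lambda>z. g i (\<mu> + z))" for i
  proof (rule integrable_std_gauss_quadratic[where C="2 * (\<mu> $ i)\<^sup>2" and D=2])
    fix z :: "real^'n"
    have "(s (\<mu> + z))\<^sup>2 \<le> 1"
      using js_shrink_bound[OF c] by (simp add: s_def abs_square_le_1)
    then have "\<bar>g i (\<mu> + z)\<bar> \<le> (\<mu> $ i + z $ i)\<^sup>2"
      unfolding g_def using mult_right_mono[of "(s (\<mu> + z))\<^sup>2" 1 "(\<mu> $ i + z $ i)\<^sup>2"] by simp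
    also have "\<dots> \<le> 2 * (\<mu> $ i)\<^sup>2 + 2 * (norm z)\<^sup>2"
      using zero_le_power2[of "\<mu> $ i - z $ i"] coord_sq_le_norm_sq[of z i]
      unfolding power2_sum power2_diff by linarith
    finally show "\<bar>g i (\<mu> + z)\<bar> \<le> 2 * (\<mu> $ i)\<^sup>2 + 2 * (norm z)\<^sup>2" .
  qed (simp add: g_def s_def)
  have loss: "(norm (js (\<mu> + z) - \<mu>))\<^sup>2 = (\<Sum>i\<in>UNIV. (z $ i - s (\<mu> + z) * (\<mu> + z) $ i)\<^sup>2)" for z
    unfolding js_eq_shrink[OF c[unfolded c_def], of "\<mu> + z"] norm_sq_vec[of "_ - \<mu>"] s_def c_def
    by (simp add: algebra_simps)
  have expand: "(z $ i - s (\<mu> + z) * (\<mu> + z) $ i)\<^sup>2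
      = (z $ i)\<^sup>2 - 2 * (z $ i * (s (\<mu> + z) * (\<mu> + z) $ i)) + g i (\<mu> + z)" for i z
    unfolding g_def by (simp add: power2_eq_square algebra_simps)
  have stein_i: "integrable std_gauss (\<lambda>z. z $ i * (s (\<mu> + z) * (\<mu> + z) $ i))"
    "integrable std_gauss (\<lambda>z. D i (\<mu> + z))"
    "(\<integral>z. z $ i * (s (\<mu> + z) * (\<mu> + z) $ i) \<partial>std_gauss) = (\<integral>z. D i (\<mu> + z) \<partial>std_gauss)" for i
    using stein[of i] by (simp_all add: D_def)
  have int_coord: "integrable std_gauss (\<lambda>z. (z $ i - s (\<mu> + z) * (\<mu> + z) $ i)\<^sup>2)" for i
    unfolding expand
    by (intro Bochner_Integration.integrable_add Bochner_Integration.integrable_diff integrable_mult_right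
        std_gauss_coord_sq(1) stein_i(1) int_g)
  have coord: "(\<integral>z. (z $ i - s (\<mu> + z) * (\<mu> + z) $ i)\<^sup>2 \<partial>std_gauss)
      = (\<integral>z. 1 - 2 * D i (\<mu> + z) + g i (\<mu> + z) \<partial>std_gauss)" for i
  proof -
    interpret G: prob_space "std_gauss :: (real^'n) measure"
      by (rule prob_space_std_gauss)
    have "(\<integral>z. (z $ i - s (\<mu> + z) * (\<mu> + z) $ i)\<^sup>2 \<partial>std_gauss)
        = (\<integral>z. (z $ i)\<^sup>2 \<partial>std_gauss) - 2 * (\<integral>z. z $ i * (s (\<mu> + z) * (\<mu> + z) $ i) \<partial>std_gauss)
          + (\<integral>z. g i (\<mu> + z) \<partial>std_gauss)"
      unfolding expand using std_gauss_coord_sq(1)[of i] stein_i(1)[of i] int_g[of i]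
      by (simp del: vector_add_component)
    also have "\<dots> = (\<integral>z. 1 - 2 * D i (\<mu> + z) + g i (\<mu> + z) \<partial>std_gauss)"
      unfolding std_gauss_coord_sq(2) stein_i(3) using stein_i(2)[of i] int_g[of i] G.prob_space
      by (simp del: vector_add_component)
    finally show ?thesis .
  qed
  have "js_risk \<mu> = (\<Sum>i\<in>UNIV. \<integral>z. 1 - 2 * D i (\<mu> + z) + g i (\<mu> + z) \<partial>std_gauss)"
    unfolding js_risk_def loss coord[symmetric] using int_coord by (simp add: integral_sum)
  also have "\<dots> = (\<integral>z. (\<Sum>i\<in>UNIV. 1 - 2 * D i (\<mu> + z) + g i (\<mu> + z)) \<partial>std_gauss)"
  proof (rule Bochner_Integration.integral_sum[symmetric])
    interpret G: prob_space "std_gauss :: (real^'n) measure"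
      by (rule prob_space_std_gauss)
    show "integrable std_gauss (\<lambda>z. 1 - 2 * D i (\<mu> + z) + g i (\<mu> + z))" for i
      by (intro Bochner_Integration.integrable_add Bochner_Integration.integrable_diff integrable_mult_right
          stein_i(2) int_g G.integrable_const)
  qed
  also have "\<dots> = (\<integral>z. js_sure c (real CARD('n)) ((norm (\<mu> + z))\<^sup>2) \<partial>std_gauss)"
  proof -
    have "(\<Sum>i\<in>UNIV. 1 - 2 * D i y + g i y) = js_sure c (real CARD('n)) ((norm y)\<^sup>2)" for y
    proof -
      have "(\<Sum>i\<in>UNIV. (y $ i)\<^sup>2) = (norm y)\<^sup>2"
        by (rule norm_sq_vec[symmetric])
      then show ?thesis
        unfolding D_def g_def s_def s'_def js_sure_eq[OF _ c, of "real CARD('n)", symmetric, OF c_def]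
        by (simp add: sum.distrib sum_subtractf sum_distrib_left[symmetric] sum_distrib_right[symmetric]
            algebra_simps)
    qed
    then show ?thesis
      by simp
  qed
  finally show ?thesis
    unfolding c_def .
qed

lemma js_sure_bound:
  assumes c: "c = B - 2" "0 < c" and t: "0 \<le> t"
  shows "\<bar>js_sure c B t\<bar> \<le> B"
proof (cases "t \<le> c")
  case False
  then have "c\<^sup>2 / t \<le> c"
    using c by (simp add: power2_eq_square divide_le_eq mult_left_mono)
  moreover have "0 \<le> c\<^sup>2 / t"
    using t by simp
  ultimately show ?thesis
    unfolding js_sure_def using False c by auto
qed (use c t in \<open>auto simp: js_sure_def\<close>)

lemma js_sure_mono:
  assumes c: "c = B - 2" "0 < c" and xy: "0 \<le> x" "x \<le> y"
  shows "js_sure c B x \<le> js_sure c B y"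
proof -
  have lt: "c\<^sup>2 / t < c" if "c < t" for t
    using that c by (simp add: power2_eq_square divide_less_eq mult_strict_left_mono)
  show ?thesis
  proof (cases "y \<le> c")
    case False
    show ?thesis
    proof (cases "x \<le> c")
      case True
      then show ?thesis
        unfolding js_sure_def using False lt[of y] c by auto
    next
      case x: False
      have "c\<^sup>2 / y \<le> c\<^sup>2 / x"
        using x xy c by (intro divide_left_mono) auto
      then show ?thesis
        unfolding js_sure_def using False x by auto
    qed
  qed (use xy in \<open>auto simp: js_sure_def\<close>)
qed

text \<open>\<open>shift_ratio r\<close> is the density of the symmetric mixture \<open>(N(r,1) + N(-r,1))/2\<close> relative
  to \<open>N(0,1)\<close>; it is the density of \<open>\<plusminus>(r + X)\<close> with respect to the law of \<open>X\<close>.\<close>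
definition shift_ratio :: "real \<Rightarrow> real \<Rightarrow> real" where
  "shift_ratio r w = exp (- r\<^sup>2 / 2) * cosh (r * w)"

lemma shift_ratio_pos: "0 < shift_ratio r w"
  unfolding shift_ratio_def by simp

lemma shift_ratio_abs: "0 \<le> r \<Longrightarrow> shift_ratio r \<bar>w\<bar> = shift_ratio r w"
  unfolding shift_ratio_def by (metis abs_mult abs_of_nonneg cosh_real_abs)

lemma std_normal_density_even: "std_normal_density (- w) = std_normal_density w"
  unfolding std_normal_density_def by simp

lemma std_normal_density_shift:
  "std_normal_density (w - r) = std_normal_density w * exp (- r\<^sup>2 / 2) * exp (r * w)"
proof -
  have "- (w - r)\<^sup>2 / 2 = - w\<^sup>2 / 2 + - r\<^sup>2 / 2 + r * w"
    by (simp add: power2_eq_square field_simps)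
  then have "exp (- (w - r)\<^sup>2 / 2) = exp (- w\<^sup>2 / 2) * exp (- r\<^sup>2 / 2) * exp (r * w)"
    by (simp only: exp_add)
  then show ?thesis
    unfolding std_normal_density_def by (simp add: mult_ac)
qed

lemma std_normal_density_mixture:
  "(std_normal_density (w - r) + std_normal_density (w + r)) / 2 = std_normal_density w * shift_ratio r w"
  using std_normal_density_shift[of w r] std_normal_density_shift[of w "- r"]
  unfolding shift_ratio_def cosh_def by (simp add: field_simps)

lemma cosh_ratio_mono:
  fixes r1 r2 s w :: real
  assumes "0 \<le> r1" "r1 \<le> r2" "0 \<le> s" "s \<le> w"
  shows "cosh (r2 * s) * cosh (r1 * w) \<le> cosh (r2 * w) * cosh (r1 * s)"
proof -
  have product: "2 * (cosh x * cosh y) = cosh (x + y) + cosh (x - y)" for x y :: real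
    by (simp add: cosh_add cosh_diff)
  have "r1 * s \<le> r2 * w" "0 \<le> (r2 - r1) * (w - s)" "0 \<le> (r2 + r1) * (w - s)" "0 \<le> (r2 - r1) * (w + s)"
    using assms by (auto intro: mult_mono)
  moreover have "0 \<le> r2 * s" "0 \<le> r1 * w" "0 \<le> r1 * s"
    using assms by auto
  ultimately have "cosh (r2 * s + r1 * w) \<le> cosh (r2 * w + r1 * s)"
    and "cosh \<bar>r2 * s - r1 * w\<bar> \<le> cosh (r2 * w - r1 * s)"
    by (simp_all only: cosh_real_nonneg_le_iff abs_ge_zero) (simp_all add: algebra_simps abs_le_iff)
  then have "2 * (cosh (r2 * s) * cosh (r1 * w)) \<le> 2 * (cosh (r2 * w) * cosh (r1 * s))"
    unfolding product by simp
  then show ?thesis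
    by simp
qed

lemma shift_ratio_crossing:
  assumes r: "0 \<le> r1" "r1 \<le> r2" and sw: "\<bar>s\<bar> \<le> \<bar>w\<bar>"
    and le: "shift_ratio r2 w \<le> shift_ratio r1 w"
  shows "shift_ratio r2 s \<le> shift_ratio r1 s"
proof -
  have "shift_ratio r2 \<bar>s\<bar> * shift_ratio r1 \<bar>w\<bar>
      = exp (- r2\<^sup>2 / 2) * exp (- r1\<^sup>2 / 2) * (cosh (r2 * \<bar>s\<bar>) * cosh (r1 * \<bar>w\<bar>))"
    unfolding shift_ratio_def by (simp add: mult_ac)
  also have "\<dots> \<le> exp (- r2\<^sup>2 / 2) * exp (- r1\<^sup>2 / 2) * (cosh (r2 * \<bar>w\<bar>) * cosh (r1 * \<bar>s\<bar>))"
    using cosh_ratio_mono[of r1 r2 "\<bar>s\<bar>" "\<bar>w\<bar>"] r sw by (intro mult_left_mono) auto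
  also have "\<dots> = shift_ratio r2 \<bar>w\<bar> * shift_ratio r1 \<bar>s\<bar>"
    unfolding shift_ratio_def by (simp add: mult_ac)
  also have "\<dots> \<le> shift_ratio r1 \<bar>w\<bar> * shift_ratio r1 \<bar>s\<bar>"
    using le r shift_ratio_pos[of r1 "\<bar>s\<bar>"] by (intro mult_right_mono) (simp_all add: shift_ratio_abs)
  finally have "shift_ratio r2 \<bar>s\<bar> \<le> shift_ratio r1 \<bar>s\<bar>"
    using shift_ratio_pos[of r1 "\<bar>w\<bar>"] by (simp add: mult.commute[of _ "shift_ratio r1 \<bar>w\<bar>"])
  then show ?thesis
    using r by (simp add: shift_ratio_abs)
qed

lemma shift_ratio_at_zero: "0 \<le> r1 \<Longrightarrow> r1 \<le> r2 \<Longrightarrow> shift_ratio r2 0 \<le> shift_ratio r1 0"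
  unfolding shift_ratio_def by (simp add: power_mono)

lemma std_normal_density_shift_integral:
  "integrable lborel (\<lambda>w. std_normal_density (w - r))" "(\<integral>w. std_normal_density (w - r) \<partial>lborel) = 1"
proof -
  have "(\<lambda>w. std_normal_density (w - r)) = normal_density r 1"
    by (simp add: fun_eq_iff normal_density_def)
  then show "integrable lborel (\<lambda>w. std_normal_density (w - r))" "(\<integral>w. std_normal_density (w - r) \<partial>lborel) = 1"
    by simp_all
qed

lemma shift_ratio_integral:
  "integrable lborel (\<lambda>w. std_normal_density w * shift_ratio r w)"
  "(\<integral>w. std_normal_density w * shift_ratio r w \<partial>lborel) = 1"
  unfolding std_normal_density_mixture[symmetric]
  using std_normal_density_shift_integral[of r] std_normal_density_shift_integral[of "- r"] by simp_all

lemma shift_ratio_measurable [measurable]: "shift_ratio r \<in> borel_measurable borel"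
  unfolding shift_ratio_def by (intro borel_measurable_continuous_onI continuous_intros)

lemma std_normal_shift_square_integral:
  fixes k :: "real \<Rightarrow> real"
  assumes [measurable]: "k \<in> borel_measurable borel"
    and bound: "\<And>u. 0 \<le> u \<Longrightarrow> \<bar>k u\<bar> \<le> K"
  shows "integrable lborel (\<lambda>w. k (w\<^sup>2) * (std_normal_density w * shift_ratio r w))"
    and "(\<integral>t. k ((r + t)\<^sup>2) \<partial>std_normal) = (\<integral>w. k (w\<^sup>2) * (std_normal_density w * shift_ratio r w) \<partial>lborel)"
proof -
  have weighted: "integrable lborel (\<lambda>w. k (w\<^sup>2) * f w)"
    if f: "integrable lborel f" "\<And>w. 0 \<le> f w" for f :: "real \<Rightarrow> real"
  proof (rule Bochner_Integration.integrable_bound[where f="\<lambda>w. K * f w"])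
    show "AE w in lborel. norm (k (w\<^sup>2) * f w) \<le> norm (K * f w)"
      using bound f(2) by (intro AE_I2) (auto simp: abs_mult intro!: mult_right_mono order_trans[OF _ abs_ge_self])
  qed (use f borel_measurable_integrable in simp_all)
  have int_shift: "integrable lborel (\<lambda>w. k (w\<^sup>2) * std_normal_density (w - r))"
    by (rule weighted[OF std_normal_density_shift_integral(1)]) simp
  have "(\<integral>t. k ((r + t)\<^sup>2) \<partial>std_normal) = (\<integral>w. k (w\<^sup>2) * std_normal_density (w - r) \<partial>lborel)"
    using lborel_integral_real_affine[of 1 "\<lambda>w. k (w\<^sup>2) * std_normal_density (w - r)" r]
    by (simp add: integral_std_normal mult_ac)
  moreover have "(\<integral>w. k (w\<^sup>2) * std_normal_density (w + r) \<partial>lborel) = (\<integral>w. k (w\<^sup>2) * std_normal_density (w - r) \<partial>lborel)"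
    using lborel_integral_real_affine[of "-1" "\<lambda>w. k (w\<^sup>2) * std_normal_density (w + r)" 0]
    by (simp add: std_normal_density_even[of "_ - r", simplified])
  moreover have "integrable lborel (\<lambda>w. k (w\<^sup>2) * std_normal_density (w + r))"
    using weighted[OF std_normal_density_shift_integral(1)[of "- r"]] by simp
  ultimately show "(\<integral>t. k ((r + t)\<^sup>2) \<partial>std_normal) = (\<integral>w. k (w\<^sup>2) * (std_normal_density w * shift_ratio r w) \<partial>lborel)"
    using int_shift by (simp add: std_normal_density_mixture[symmetric] add_divide_distrib distrib_left)
  show "integrable lborel (\<lambda>w. k (w\<^sup>2) * (std_normal_density w * shift_ratio r w))"
    by (rule weighted[OF shift_ratio_integral(1)]) (simp add: less_imp_le[OF shift_ratio_pos])
qed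

text \<open>For \<open>k\<close> bounded and nondecreasing on \<open>[0, \<infinity>)\<close>, \<open>E k((r + X)\<^sup>2)\<close> is nondecreasing in
  \<open>r \<ge> 0\<close>.  The difference of the two expectations is \<open>\<integral> k(w\<^sup>2) \<phi>(w) (\<rho>\<^sub>2 - \<rho>\<^sub>1)(w) dw\<close>, where
  \<open>\<rho>\<^sub>2 - \<rho>\<^sub>1\<close> has total mass zero and changes sign once, from \<open>-\<close> to \<open>+\<close>, as \<open>\<bar>w\<bar>\<close> grows.
  Subtracting the constant \<open>\<kappa>\<close> (the largest value of \<open>k(w\<^sup>2)\<close> where \<open>\<rho>\<^sub>2 \<le> \<rho>\<^sub>1\<close>) makes the
  integrand pointwise nonnegative.\<close>
lemma std_normal_shift_square_mono:
  fixes k :: "real \<Rightarrow> real"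
  assumes [measurable]: "k \<in> borel_measurable borel"
    and mono: "\<And>u v. 0 \<le> u \<Longrightarrow> u \<le> v \<Longrightarrow> k u \<le> k v"
    and bound: "\<And>u. 0 \<le> u \<Longrightarrow> \<bar>k u\<bar> \<le> K"
    and r: "0 \<le> r1" "r1 \<le> r2"
  shows "(\<integral>t. k ((r1 + t)\<^sup>2) \<partial>std_normal) \<le> (\<integral>t. k ((r2 + t)\<^sup>2) \<partial>std_normal)"
proof -
  define \<delta> where "\<delta> w = std_normal_density w * (shift_ratio r2 w - shift_ratio r1 w)" for w
  define S where "S = {w. shift_ratio r2 w \<le> shift_ratio r1 w}"
  define \<kappa> where "\<kappa> = (SUP w\<in>S. k (w\<^sup>2))"
  have bdd: "bdd_above ((\<lambda>w. k (w\<^sup>2)) ` S)"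
    by (rule bdd_aboveI[where M=K]) (use bound in \<open>auto simp: abs_le_iff\<close>)
  have sign: "0 \<le> (k (w\<^sup>2) - \<kappa>) * \<delta> w" for w
  proof (cases "w \<in> S")
    case True
    then have "k (w\<^sup>2) \<le> \<kappa>" "\<delta> w \<le> 0"
      using cSUP_upper[OF True bdd] by (simp_all add: \<kappa>_def \<delta>_def S_def mult_nonneg_nonpos)
    then show ?thesis
      by (simp add: mult_nonpos_nonpos)
  next
    case False
    have "\<kappa> \<le> k (w\<^sup>2)"
      unfolding \<kappa>_def
    proof (rule cSUP_least)
      show "S \<noteq> {}"
        using shift_ratio_at_zero[OF r] by (auto simp: S_def)
      fix s assume s: "s \<in> S"
      have "\<not> \<bar>w\<bar> \<le> \<bar>s\<bar>"
        using shift_ratio_crossing[OF r, of w s] s False by (auto simp: S_def)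
      then have "\<bar>s\<bar> \<le> \<bar>w\<bar>"
        by simp
      then have "s\<^sup>2 \<le> w\<^sup>2"
        by (simp add: abs_le_square_iff)
      then show "k (s\<^sup>2) \<le> k (w\<^sup>2)"
        by (intro mono) auto
    qed
    moreover have "0 \<le> \<delta> w"
      using False by (simp add: \<delta>_def S_def)
    ultimately show ?thesis
      by simp
  qed
  note integral = std_normal_shift_square_integral[OF \<open>k \<in> borel_measurable borel\<close> bound]
  have "(\<integral>t. k ((r2 + t)\<^sup>2) \<partial>std_normal) - (\<integral>t. k ((r1 + t)\<^sup>2) \<partial>std_normal)
      = (\<integral>w. k (w\<^sup>2) * (std_normal_density w * shift_ratio r2 w) \<partial>lborel)
        - (\<integral>w. k (w\<^sup>2) * (std_normal_density w * shift_ratio r1 w) \<partial>lborel)"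
    using integral(2)[of r1] integral(2)[of r2] by simp
  also have "\<dots> = (\<integral>w. (k (w\<^sup>2) - \<kappa>) * \<delta> w \<partial>lborel)
        + \<kappa> * ((\<integral>w. std_normal_density w * shift_ratio r2 w \<partial>lborel) - (\<integral>w. std_normal_density w * shift_ratio r1 w \<partial>lborel))"
  proof -
    have "(\<lambda>w. (k (w\<^sup>2) - \<kappa>) * \<delta> w)
      = (\<lambda>w. (k (w\<^sup>2) * (std_normal_density w * shift_ratio r2 w) - k (w\<^sup>2) * (std_normal_density w * shift_ratio r1 w))
          - (\<kappa> * (std_normal_density w * shift_ratio r2 w) - \<kappa> * (std_normal_density w * shift_ratio r1 w)))"
      by (simp add: fun_eq_iff \<delta>_def algebra_simps)
    then show ?thesis
      using integral(1)[of r1] integral(1)[of r2] shift_ratio_integral(1)[of r1] shift_ratio_integral(1)[of r2]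
      by (simp add: algebra_simps)
  qed
  also have "\<dots> = (\<integral>w. (k (w\<^sup>2) - \<kappa>) * \<delta> w \<partial>lborel)"
    unfolding shift_ratio_integral(2) by simp
  also have "\<dots> \<ge> 0"
    by (rule integral_nonneg_AE) (use sign in auto)
  finally show ?thesis
    by simp
qed

text \<open>For a bounded function \<open>k\<close> that is nondecreasing on \<open>[0, \<infinity>)\<close>, the Gaussian average of
  \<open>k(\<parallel>r e\<^sub>i + Z\<parallel>\<^sup>2)\<close> is nondecreasing in \<open>r \<ge> 0\<close>: resampling the \<open>i\<close>-th coordinate reduces
  this to the one-dimensional statement.\<close>
lemma std_gauss_radial_mono:
  fixes k :: "real \<Rightarrow> real" and i :: "'n::finite"
  assumes [measurable]: "k \<in> borel_measurable borel"
    and mono: "\<And>u v. 0 \<le> u \<Longrightarrow> u \<le> v \<Longrightarrow> k u \<le> k v"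
    and bound: "\<And>u. 0 \<le> u \<Longrightarrow> \<bar>k u\<bar> \<le> K"
  shows "mono_on {0..} (\<lambda>r. \<integral>z. k ((norm (r *\<^sub>R axis i 1 + z))\<^sup>2) \<partial>(std_gauss :: (real^'n) measure))"
proof (rule mono_onI)
  fix r1 r2 :: real
  assume r: "r1 \<in> {0..}" "r2 \<in> {0..}" "r1 \<le> r2"
  define a where "a z = (norm z)\<^sup>2 - (z $ i)\<^sup>2" for z :: "real^'n"
  have a: "0 \<le> a z" for z
    using coord_sq_le_norm_sq[of z i] by (simp add: a_def)
  have resampled: "(norm (r *\<^sub>R axis i 1 + vec_upd z i t))\<^sup>2 = a z + (r + t)\<^sup>2" for r t z
  proof -
    have "r *\<^sub>R axis i 1 + vec_upd z i t = vec_upd z i (r + t)"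
      by (simp add: vec_eq_iff axis_def)
    then show ?thesis
      by (simp add: norm_vec_upd a_def)
  qed
  have int: "integrable std_gauss (\<lambda>z::real^'n. k ((norm (r *\<^sub>R axis i 1 + z))\<^sup>2))" for r
    by (rule integrable_std_gauss_quadratic[where C=K and D=0]) (simp_all add: bound)
  note resample = resample_integral[OF int, where i=i, unfolded resampled]
  have "(\<integral>z. k ((norm (r1 *\<^sub>R axis i 1 + z))\<^sup>2) \<partial>std_gauss)
      = (\<integral>z. (\<integral>t. k (a z + (r1 + t)\<^sup>2) \<partial>std_normal) \<partial>std_gauss)"
    by (rule resample(1))
  also have "\<dots> \<le> (\<integral>z. (\<integral>t. k (a z + (r2 + t)\<^sup>2) \<partial>std_normal) \<partial>std_gauss)"
  proof (rule integral_mono[OF resample(2) resample(2)])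
    show "(\<integral>t. k (a z + (r1 + t)\<^sup>2) \<partial>std_normal) \<le> (\<integral>t. k (a z + (r2 + t)\<^sup>2) \<partial>std_normal)" for z
      by (rule std_normal_shift_square_mono[where K=K]) (use r a mono bound in auto)
  qed
  also have "\<dots> = (\<integral>z. k ((norm (r2 *\<^sub>R axis i 1 + z))\<^sup>2) \<partial>std_gauss)"
    by (rule resample(1)[symmetric])
  finally show "(\<integral>z. k ((norm (r1 *\<^sub>R axis i 1 + z))\<^sup>2) \<partial>std_gauss)
      \<le> (\<integral>z. k ((norm (r2 *\<^sub>R axis i 1 + z))\<^sup>2) \<partial>std_gauss)" .
qed

theorem mainTheorem7:
  assumes "CARD('n::finite) \<ge> 3"
  shows "\<exists>g :: real \<Rightarrow> real. mono_on {0..} g \<and>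
           (\<forall>\<mu> :: real ^ 'n. js_risk \<mu> = g (norm \<mu>))"
proof -
  fix i :: 'n
  define c B where "c = real CARD('n) - 2" and "B = real CARD('n)"
  have c: "c = B - 2" "0 < c"
    using assms by (simp_all add: c_def B_def)
  define g where "g r = js_risk (r *\<^sub>R axis i (1::real) :: real^'n)" for r
  have "g = (\<lambda>r. \<integral>z. js_sure c B ((norm (r *\<^sub>R axis i 1 + z))\<^sup>2) \<partial>std_gauss)"
    unfolding g_def c_def B_def by (simp add: js_risk_sure[OF assms])
  then have "mono_on {0..} g"
    using std_gauss_radial_mono[of "js_sure c B", OF _ js_sure_mono[OF c] js_sure_bound[OF c]] by simp
  moreover have "\<forall>\<mu> :: real^'n. js_risk \<mu> = g (norm \<mu>)"
    unfolding g_def using js_risk_radial by blast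
  ultimately show ?thesis
    by blast
qed

end
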